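(* Let $f\in\mathbb{R}[x,y]$ be regular in $x$, let $x=\gamma(y)$ be a Newton--Puiseux root of $f$, let $\rho=\rho(\gamma,f)$ be the contact order of $\gamma$ and $f$, and let $\tilde\gamma$ be the truncated Newton--Puiseux root associated to $\gamma$. Then: (i) If $\tilde\gamma$ is real, then $\gamma$ is a real Newton--Puiseux root of $f$. (ii) Write $f(X+\tilde\gamma(Y),Y)=\sum c_{ij}X^iY^{j/N}$. Then the multiplicity $\mathrm{mult}_\gamma f$ of $\gamma$ as a root of $f$ equals $$\min\{\, i \mid i\rho+j/N=\mathrm{ord}\, f(\tilde\gamma_\rho(y),y)\ \text{and}\ c_{ij}\neq0\,\},$$ where $\tilde\gamma_\rho$ is the $\rho$-approximation of $\tilde\gamma$. (iii) Let $g\in\mathbb{R}[x,y]$ be regular in $x$ and let $h:=\gcd(f,g)$. If $\tilde\gamma$ is a Newton--Puiseux root $\bmod\ \rho(\gamma,f)+$ of $h$, then $\gamma$ is also a Newton--Puiseux root of $g$.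
   Context: A polynomial $f$ with $f(0,0)=0$, written $f=f_m+f_{m+1}+\cdots$ ($f_k$ homogeneous of degree $k$, $f_m\not\equiv0$), is regular in $x$ if $f_m(1,0)\neq0$. A Puiseux series is an element $\phi(y)=\sum_i a_iy^{\alpha_i}\in\mathbb{C}\{y^{1/N}\}$ with positive rational exponents; it is real if all its coefficients are real. A Newton--Puiseux root of $f$ is a Puiseux series $\gamma$ with $f(\gamma(y),y)\equiv0$; $\mathcal V(f)$ is the set of all of them, and $\mathrm{mult}_\gamma f$ is the largest $m$ with $f=(x-\gamma(y))^m h$, $h(\gamma(y),y)\not\equiv0$. The contact order of a Puiseux series $\varphi$ with $f$ is $\rho(\varphi,f):=\max\{\mathrm{ord}(\varphi(y)-\gamma'(y))\mid \varphi\neq\gamma'\in\mathcal V(f)\}$. If $\gamma(y)=\sum c_\alpha y^\alpha$ is a Newton--Puiseux root of $f$ and $\rho=\rho(\gamma,f)$, its truncated Newton--Puiseux root is $\tilde\gamma(y):=\sum_{\alpha\le\rho}c_\alpha y^\alpha$. For $\rho>0$, the $\rho$-approximation of a Puiseux series $\phi(y)=\sum_i a_iy^{\alpha_i}$ is $\sum_{\alpha_i<\rho}a_iy^{\alpha_i}+cy^\rho$ with $c$ a generic real number. For a rational $q$, a Puiseux series $\varphi$ is a Newton--Puiseux root $\bmod\ q+$ of $h$ if there is a Newton--Puiseux root $\xi$ of $h$ with $\mathrm{ord}(\varphi(y)-\xi(y))>q$. *)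

theory Defs
  imports "HOL-Computational_Algebra.Computational_Algebra" "HOL-Computational_Algebra.Field_as_Ring"
begin

text \<open>Bivariate real polynomials f(x,y) are represented as real poly poly:
  the outer variable is x, the inner one is y, i.e. f = sum_i (coeff f i)(y) * x^i.\<close>

definition bcoeff :: "real poly poly \<Rightarrow> nat \<Rightarrow> nat \<Rightarrow> real" where
  "bcoeff f i j = coeff (coeff f i) j"

text \<open>Regular in x: f(0,0)=0 and, with m the order of f (degree of the lowest
  nonzero homogeneous part f_m), f_m(1,0) = coefficient of x^m is nonzero.\<close>
definition regular_x :: "real poly poly \<Rightarrow> bool" where
  "regular_x f \<longleftrightarrow> bcoeff f 0 0 = 0 \<and>
     (\<exists>m. bcoeff f m 0 \<noteq> 0 \<and> (\<forall>i j. i + j < m \<longrightarrow> bcoeff f i j = 0))"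

text \<open>Formal Puiseux series (complex coefficients, nonnegative rational exponents),
  represented canonically as exponent-to-coefficient maps; level N means all
  exponents lie in (1/N)N, i.e. the series lies in C[[y^(1/N)]].\<close>
type_synonym pseries = "rat \<Rightarrow> complex"

definition level :: "nat \<Rightarrow> pseries \<Rightarrow> bool" where
  "level N \<phi> \<longleftrightarrow> N > 0 \<and> (\<forall>q. \<phi> q \<noteq> 0 \<longrightarrow> (\<exists>k::nat. q = of_nat k / of_nat N))"

definition puiseux :: "pseries \<Rightarrow> bool" where
  "puiseux \<phi> \<longleftrightarrow> (\<exists>N. level N \<phi>) \<and> \<phi> 0 = 0"

definition den :: "pseries \<Rightarrow> nat" where
  "den \<phi> = (SOME N. level N \<phi>)"

definition to_fps :: "nat \<Rightarrow> pseries \<Rightarrow> complex fps" where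
  "to_fps N \<phi> = Abs_fps (\<lambda>k. \<phi> (of_nat k / of_nat N))"

definition of_fps :: "nat \<Rightarrow> complex fps \<Rightarrow> pseries" where
  "of_fps N P = (\<lambda>q. if \<exists>k::nat. q = of_nat k / of_nat N
                     then P $ (nat \<lfloor>q * of_nat N\<rfloor>) else 0)"

text \<open>The real polynomial a(y) viewed as a power series in t = y^(1/N).\<close>
definition yfps :: "nat \<Rightarrow> real poly \<Rightarrow> complex fps" where
  "yfps N a = Abs_fps (\<lambda>k. if N dvd k then complex_of_real (coeff a (k div N)) else 0)"

definition lift :: "nat \<Rightarrow> real poly poly \<Rightarrow> complex fps poly" where
  "lift N f = map_poly (yfps N) f"

text \<open>f(phi(y), y) as a Puiseux series.\<close>
definition peval :: "real poly poly \<Rightarrow> pseries \<Rightarrow> pseries" where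
  "peval f \<phi> = of_fps (den \<phi>) (poly (lift (den \<phi>) f) (to_fps (den \<phi>) \<phi>))"

definition NP_roots :: "real poly poly \<Rightarrow> pseries set" where
  "NP_roots f = {\<phi>. puiseux \<phi> \<and> peval f \<phi> = (\<lambda>_. 0)}"

definition is_real :: "pseries \<Rightarrow> bool" where
  "is_real \<phi> \<longleftrightarrow> (\<forall>q. Im (\<phi> q) = 0)"

definition pord :: "pseries \<Rightarrow> rat" where
  "pord \<phi> = (LEAST q. \<phi> q \<noteq> 0)"

definition mult_root :: "real poly poly \<Rightarrow> pseries \<Rightarrow> nat" where
  "mult_root f \<gamma> = (GREATEST m. \<exists>h. lift (den \<gamma>) f = [:- to_fps (den \<gamma>) \<gamma>, 1:] ^ m * h
                                 \<and> poly h (to_fps (den \<gamma>) \<gamma>) \<noteq> 0)"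

definition contact :: "pseries \<Rightarrow> real poly poly \<Rightarrow> rat" where
  "contact \<phi> f = Max {pord (\<lambda>q. \<phi> q - \<gamma>' q) | \<gamma>'. \<gamma>' \<in> NP_roots f \<and> \<gamma>' \<noteq> \<phi>}"

definition truncated :: "pseries \<Rightarrow> real poly poly \<Rightarrow> pseries" where
  "truncated \<gamma> f = (\<lambda>q. if q \<le> contact \<gamma> f then \<gamma> q else 0)"

definition approx :: "rat \<Rightarrow> pseries \<Rightarrow> real \<Rightarrow> pseries" where
  "approx \<rho> \<phi> c = (\<lambda>q. if q < \<rho> then \<phi> q else if q = \<rho> then complex_of_real c else 0)"

text \<open>Coefficient c_{i,e} of X^i Y^e in f(X + phi(Y), Y) (e rational exponent).\<close>
definition shift_coeff :: "real poly poly \<Rightarrow> pseries \<Rightarrow> nat \<Rightarrow> rat \<Rightarrow> complex" where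
  "shift_coeff f \<phi> i e = of_fps (den \<phi>)
      (coeff (pcompose (lift (den \<phi>) f) [:to_fps (den \<phi>) \<phi>, 1:]) i) e"

definition NP_root_mod :: "real poly poly \<Rightarrow> rat \<Rightarrow> pseries \<Rightarrow> bool" where
  "NP_root_mod h q \<phi> \<longleftrightarrow> (\<exists>\<xi>\<in>NP_roots h. \<xi> = \<phi> \<or> pord (\<lambda>y. \<phi> y - \<xi> y) > q)"

end

theory Submission
  imports Defs
begin

(* Work in C[[t]], t = y^(1/N), at a level N where both gamma and the contact order
   rho = a/N are visible. By maximality of rho, a root of f that agrees with gamma up to
   order rho is gamma itself. This gives (i), since conjugation maps roots of the real f to
   roots, and (iii), since roots of gcd(f, g) are roots of f.
   For (ii), write f(x + tilde gamma) = (x - delta)^m H with ord delta > rho and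
   H(delta) <> 0, substitute x := t^a x and divide out the content, getting
   t^mu (x - delta')^m W with delta'(0) = 0. If the residue W(x)|_(t=0) vanished at 0, the
   Newton-Puiseux theorem would give a root of W without constant term, i.e. a root of f
   other than gamma with contact > rho. So the residue of the rescaled shift is x^m times a
   polynomial not vanishing at 0: the minimal i on the line i rho + e = mu/N is m, and for
   generic c the rho-approximation gives f a value of order exactly mu/N. *)

section \<open>Ring homomorphisms and the substitution \<open>t := t ^ q\<close>\<close>

lemma order_eq_of_factorization:
  fixes p :: "'a::idom poly"
  assumes "p = [:-a, 1:] ^ m * q" "poly q a \<noteq> 0"
  shows "order a p = m"
proof -
  have "q \<noteq> 0" using assms(2) by auto
  then show ?thesis using assms by (simp add: order_mult order_power_n_n order_0I)
qed

locale idom_hom =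
  fixes hom :: "'a::idom \<Rightarrow> 'b::idom"
  assumes hom_add: "hom (x + y) = hom x + hom y"
    and hom_mult: "hom (x * y) = hom x * hom y"
    and hom_one: "hom 1 = 1"
begin

lemma hom_zero [simp]: "hom 0 = 0"
  using hom_add[of 0 0] by (metis add_cancel_right_right)

lemma hom_uminus: "hom (- x) = - hom x"
  using hom_add[of x "- x"] by (simp add: eq_neg_iff_add_eq_0 add.commute)

lemma hom_diff: "hom (x - y) = hom x - hom y"
  using hom_add[of x "- y"] by (simp add: hom_uminus)

lemma map_poly_hom_add: "map_poly hom (p + q) = map_poly hom p + map_poly hom q"
  by (intro poly_eqI) (simp add: coeff_map_poly hom_add)

lemma map_poly_hom_smult: "map_poly hom (smult c p) = smult (hom c) (map_poly hom p)"
  by (rule map_poly_smult) (simp_all add: hom_mult)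

lemma map_poly_hom_pCons: "map_poly hom (pCons c p) = pCons (hom c) (map_poly hom p)"
  by (rule map_poly_pCons) simp

lemma map_poly_hom_mult: "map_poly hom (p * q) = map_poly hom p * map_poly hom q"
  by (induction p) (simp_all add: map_poly_hom_add map_poly_hom_smult map_poly_hom_pCons)

lemma map_poly_hom_power: "map_poly hom (p ^ n) = map_poly hom p ^ n"
  by (induction n) (simp_all add: map_poly_hom_mult hom_one)

lemma map_poly_hom_linear: "map_poly hom [:a, 1:] = [:hom a, 1:]"
  by (simp add: map_poly_hom_pCons hom_one)

lemma poly_map_poly_hom: "poly (map_poly hom p) (hom x) = hom (poly p x)"
  by (induction p) (simp_all add: map_poly_hom_pCons hom_add hom_mult)

lemma map_poly_hom_pcompose:
  "map_poly hom (pcompose p q) = pcompose (map_poly hom p) (map_poly hom q)"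
  by (induction p)
     (simp_all add: pcompose_pCons map_poly_hom_pCons map_poly_hom_add map_poly_hom_mult)

lemma map_poly_hom_pderiv: "map_poly hom (pderiv p) = pderiv (map_poly hom p)"
  by (induction p) (simp_all add: pderiv_pCons map_poly_hom_pCons map_poly_hom_add)

lemma map_poly_hom_higher_pderiv: "map_poly hom ((pderiv ^^ n) p) = (pderiv ^^ n) (map_poly hom p)"
  by (induction n) (simp_all add: map_poly_hom_pderiv)

lemma order_map_poly_hom:
  assumes inj: "\<And>x. hom x = 0 \<Longrightarrow> x = 0" and "p \<noteq> 0"
  shows "order (hom a) (map_poly hom p) = order a p"
proof -
  obtain q where q: "p = [:- a, 1:] ^ order a p * q" "\<not> [:- a, 1:] dvd q"
    using order_decomp[OF \<open>p \<noteq> 0\<close>] by blast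
  have "map_poly hom p = [:- hom a, 1:] ^ order a p * map_poly hom q"
    by (subst q(1)) (simp add: map_poly_hom_mult map_poly_hom_power map_poly_hom_pCons hom_uminus hom_one)
  moreover have "poly (map_poly hom q) (hom a) \<noteq> 0"
    using q(2) inj poly_eq_0_iff_dvd by (metis poly_map_poly_hom)
  ultimately show ?thesis by (rule order_eq_of_factorization)
qed

end

lemma idom_hom_comp: "idom_hom h \<Longrightarrow> idom_hom g \<Longrightarrow> idom_hom (g \<circ> h)"
  by (simp add: idom_hom_def)

lemma idom_hom_map_poly: "idom_hom h \<Longrightarrow> idom_hom (map_poly h)"
  by (rule idom_hom.intro)
     (simp_all add: idom_hom.map_poly_hom_add idom_hom.map_poly_hom_mult idom_hom.hom_one)

lemma idom_hom_of_real: "idom_hom (of_real :: real \<Rightarrow> complex)"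
  by unfold_locales simp_all

lemma idom_hom_fps_of_poly: "idom_hom fps_of_poly"
  by unfold_locales (simp_all add: fps_of_poly_add fps_of_poly_mult)

lemma idom_hom_fps_nth_0: "idom_hom (\<lambda>P :: 'a::idom fps. P $ 0)"
  by unfold_locales simp_all

lemma idom_hom_fps_cnj: "idom_hom (\<lambda>P. Abs_fps (\<lambda>n. cnj (P $ n)))"
  by unfold_locales (simp_all add: fps_eq_iff fps_mult_nth cnj_sum)

lemma idom_hom_fps_compose:
  "c $ 0 = 0 \<Longrightarrow> idom_hom (\<lambda>P :: 'a::idom fps. P oo c)"
  by unfold_locales (simp_all add: fps_compose_add_distrib fps_compose_mult_distrib)

text \<open>\<open>P oo fps_X ^ q\<close> is \<open>P(t ^ q)\<close>: it re-expresses a series of level \<open>N\<close> at level \<open>N * q\<close>.\<close>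

lemma fps_compose_X_power_nth:
  assumes "q > 0"
  shows "(P oo fps_X ^ q) $ n = (if q dvd n then P $ (n div q) else 0)"
proof -
  have "(P oo fps_X ^ q) $ n = (\<Sum>i\<in>{0..n}. if i = n div q \<and> q dvd n then P $ i else 0)"
    unfolding fps_compose_nth
    by (intro sum.cong) (use assms in \<open>auto simp: fps_X_power_nth power_mult[symmetric]\<close>)
  also have "\<dots> = (if q dvd n then P $ (n div q) else 0)"
    by (simp add: sum.delta' conj_commute)
  finally show ?thesis .
qed

lemma fps_compose_X_power_nth_mult [simp]: "q > 0 \<Longrightarrow> (P oo fps_X ^ q) $ (q * n) = P $ n"
  by (simp add: fps_compose_X_power_nth)

lemma fps_compose_X_power_eq_0_iff [simp]: "q > 0 \<Longrightarrow> P oo fps_X ^ q = 0 \<longleftrightarrow> P = 0"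
  by (metis fps_ext fps_zero_nth fps_compose_0 fps_compose_X_power_nth_mult)

lemma fps_X_power_compose_X_power:
  assumes "q > 0"
  shows "(fps_X ^ k :: 'a::idom fps) oo fps_X ^ q = fps_X ^ (k * q)"
proof -
  have "(fps_X ^ q :: 'a fps) $ 0 = 0" using assms by (simp add: fps_X_power_nth)
  then show ?thesis by (simp add: fps_compose_power[symmetric] power_mult[symmetric] mult.commute)
qed

lemma fps_compose_X_power_assoc:
  assumes "q > 0" "q' > 0"
  shows "P oo fps_X ^ q oo fps_X ^ q' = (P :: 'a::idom fps) oo fps_X ^ (q * q')"
proof -
  have "(fps_X ^ q :: 'a fps) $ 0 = 0" "(fps_X ^ q' :: 'a fps) $ 0 = 0"
    using assms by (simp_all add: fps_X_power_nth)
  then show ?thesis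
    using assms by (simp add: fps_compose_assoc[symmetric] fps_X_power_compose_X_power)
qed

lemma idom_hom_fps_compose_X_power: "q > 0 \<Longrightarrow> idom_hom (\<lambda>P :: 'a::idom fps. P oo fps_X ^ q)"
  by (rule idom_hom_fps_compose) (simp add: fps_X_power_nth)

lemma map_poly_compose_X_power_assoc:
  assumes "q > 0" "q' > 0"
  shows "map_poly (\<lambda>P. P oo fps_X ^ q') (map_poly (\<lambda>P. P oo fps_X ^ q) G)
       = map_poly (\<lambda>P :: 'a::idom fps. P oo fps_X ^ (q * q')) G"
  using assms by (simp add: map_poly_map_poly o_def fps_compose_X_power_assoc)

lemma poly_ramified_shift_rescale:
  fixes Q :: "'a::idom fps poly"
  assumes "q > 0"
  shows "poly (map_poly (\<lambda>P. P oo fps_X ^ q) (pcompose (pcompose Q [:z, 1:]) [:0, fps_X ^ p:])) r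
       = poly (map_poly (\<lambda>P. P oo fps_X ^ q) Q) ((z oo fps_X ^ q) + fps_X ^ (p * q) * r)"
proof -
  interpret ramify: idom_hom "\<lambda>P :: 'a fps. P oo fps_X ^ q"
    using assms by (rule idom_hom_fps_compose_X_power)
  show ?thesis
    using assms by (simp add: ramify.map_poly_hom_pcompose ramify.map_poly_hom_pCons
        ramify.map_poly_hom_linear poly_pcompose fps_X_power_compose_X_power mult.commute)
qed

section \<open>Roots of polynomials over formal power series\<close>

abbreviation residue_poly :: "'a::idom fps poly \<Rightarrow> 'a poly" where
  "residue_poly G \<equiv> map_poly (\<lambda>P. P $ 0) G"

interpretation fps_residue: idom_hom "\<lambda>P :: 'a::idom fps. P $ 0"
  by (rule idom_hom_fps_nth_0)

lemma poly_residue_poly: "poly G x $ 0 = poly (residue_poly G) (x $ 0)"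
  by (simp add: fps_residue.poly_map_poly_hom)

lemma fps_X_power_mult_shift:
  assumes "\<And>j. j < n \<Longrightarrow> A $ j = 0"
  shows "fps_X ^ n * fps_shift n A = A"
  using assms by (intro fps_ext) (auto simp: fps_X_power_mult_nth)

lemma smult_X_power_shift_poly:
  fixes S :: "'a::comm_ring_1 fps poly"
  assumes "\<And>i j. j < n \<Longrightarrow> coeff S i $ j = 0"
  shows "S = smult (fps_X ^ n) (map_poly (fps_shift n) S)"
  by (intro poly_eqI) (simp add: coeff_map_poly fps_X_power_mult_shift assms)

lemma poly_diff_factor:
  fixes p :: "'a::comm_ring_1 poly"
  shows "\<exists>Q. poly p x - poly p y = (x - y) * Q"
proof (induction p)
  case (pCons a p)
  then obtain Q where Q: "poly p x - poly p y = (x - y) * Q" by blast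
  have "poly (pCons a p) x - poly (pCons a p) y = (x - y) * poly p x + y * (poly p x - poly p y)"
    by (simp add: algebra_simps)
  also have "\<dots> = (x - y) * (poly p x + y * Q)" by (simp add: Q algebra_simps)
  finally show ?case by blast
qed (rule exI[of _ 0], simp)

lemma poly_taylor2:
  fixes p :: "'a::idom poly"
  shows "\<exists>R. poly p (x + h) = poly p x + h * poly (pderiv p) x + h\<^sup>2 * R"
proof (induction p)
  case (pCons a p)
  then obtain R where R: "poly p (x + h) = poly p x + h * poly (pderiv p) x + h\<^sup>2 * R" by blast
  show ?case
    by (rule exI[of _ "poly (pderiv p) x + x * R + h * R"])
       (simp only: poly_pCons R, simp add: pderiv_pCons algebra_simps power2_eq_square)
qed simp

lemma poly_fps_nth_cong:
  fixes G :: "'a::comm_ring_1 fps poly"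
  assumes "\<And>j. j \<le> n \<Longrightarrow> A $ j = B $ j"
  shows "poly G A $ n = poly G B $ n"
proof -
  obtain Q where Q: "poly G A - poly G B = (A - B) * Q" using poly_diff_factor by blast
  have "A - B = fps_X ^ Suc n * fps_shift (Suc n) (A - B)"
    by (rule fps_X_power_mult_shift[symmetric]) (use assms in auto)
  then have diff: "poly G A - poly G B = fps_X ^ Suc n * (fps_shift (Suc n) (A - B) * Q)"
    using Q by (metis mult.assoc)
  have "(poly G A - poly G B) $ n = 0" unfolding diff fps_X_power_mult_nth by simp
  then show ?thesis by simp
qed

lemma newton_step:
  fixes G :: "'a::field fps poly"
  assumes deriv: "poly (pderiv G) r $ 0 \<noteq> 0" and low: "\<forall>i\<le>n. poly G r $ i = 0"
  defines "r' \<equiv> r - fps_const (poly G r $ Suc n / poly (pderiv G) r $ 0) * fps_X ^ Suc n"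
  shows "\<forall>i\<le>Suc n. poly G r' $ i = 0"
proof (intro allI impI)
  fix i assume i: "i \<le> Suc n"
  define d where "d = poly (pderiv G) r $ 0"
  define e where "e = - (poly G r $ Suc n / d)"
  define h where "h = fps_X ^ Suc n * fps_const e"
  have r': "r' = r + h" by (simp add: r'_def h_def d_def e_def fps_const_neg mult.commute)
  obtain R where R: "poly G (r + h) = poly G r + h * poly (pderiv G) r + h\<^sup>2 * R"
    using poly_taylor2 by blast
  have h2: "h\<^sup>2 * R = fps_X ^ Suc n * (fps_X ^ Suc n * (fps_const e * fps_const e * R))"
    by (simp add: h_def power2_eq_square mult_ac)
  have "(h\<^sup>2 * R) $ i = 0" using i unfolding h2 fps_X_power_mult_nth by simp
  moreover have "(h * poly (pderiv G) r) $ i = (if i = Suc n then - poly G r $ Suc n else 0)"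
  proof -
    have hD: "h * poly (pderiv G) r = fps_X ^ Suc n * (fps_const e * poly (pderiv G) r)"
      by (simp add: h_def mult_ac)
    show ?thesis
      unfolding hD fps_X_power_mult_nth using i deriv by (simp add: e_def d_def)
  qed
  ultimately show "poly G r' $ i = 0"
    using low i unfolding r' R by (cases "i = Suc n") simp_all
qed

lemma hensel_simple_root:
  fixes G :: "'a::field fps poly"
  assumes root: "poly (residue_poly G) c = 0"
    and simple: "poly (pderiv (residue_poly G)) c \<noteq> 0"
  shows "\<exists>r. poly G r = 0 \<and> r $ 0 = c"
proof -
  define step where
    "step n r = r - fps_const (poly G r $ Suc n / poly (pderiv G) r $ 0) * fps_X ^ Suc n" for n r
  define s where "s = rec_nat (fps_const c) step"
  have s_Suc: "s (Suc n) = step n (s n)" for n by (simp add: s_def)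
  have step_nth: "step n r $ i = r $ i" if "i \<le> n" for r n i
    using that by (simp add: step_def fps_X_power_mult_right_nth)
  have approx: "s n $ 0 = c \<and> (\<forall>i\<le>n. poly G (s n) $ i = 0)" for n
  proof (induction n)
    case 0
    then show ?case using root by (simp add: s_def poly_residue_poly)
  next
    case (Suc n)
    have d: "poly (pderiv G) (s n) $ 0 \<noteq> 0"
      using Suc.IH simple by (simp add: poly_residue_poly fps_residue.map_poly_hom_pderiv)
    have "\<forall>i\<le>Suc n. poly G (step n (s n)) $ i = 0"
      unfolding step_def by (rule newton_step[OF d]) (use Suc.IH in blast)
    moreover have "step n (s n) $ 0 = c" using step_nth[of 0 n] Suc.IH by simp
    ultimately show ?case by (simp add: s_Suc)
  qed
  have stable: "s m $ i = s i $ i" if "i \<le> m" for i m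
    using that
  proof (induction m)
    case (Suc m)
    then show ?case by (cases "i = Suc m") (simp_all add: s_Suc step_nth)
  qed simp
  define r where "r = Abs_fps (\<lambda>n. s n $ n)"
  have "poly G r $ n = poly G (s n) $ n" for n
    by (rule poly_fps_nth_cong) (use stable[of _ n] in \<open>simp add: r_def\<close>)
  then have "poly G r = 0" using approx by (simp add: fps_eq_iff)
  moreover have "r $ 0 = c" using approx by (simp add: r_def)
  ultimately show ?thesis by blast
qed

lemma pcompose_power_left: "pcompose (p ^ n) q = (pcompose p q) ^ n"
  by (induction n) (simp_all add: pcompose_mult pcompose_1)

lemma order_pcompose_shift:
  fixes p :: "'a::idom poly"
  assumes "p \<noteq> 0"
  shows "order 0 (pcompose p [:c, 1:]) = order c p"
proof -
  obtain q where q: "p = [:- c, 1:] ^ order c p * q" "\<not> [:- c, 1:] dvd q"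
    using order_decomp[OF assms] by blast
  have "pcompose p [:c, 1:] = [:- 0, 1:] ^ order c p * pcompose q [:c, 1:]"
    by (subst q(1)) (simp add: pcompose_mult pcompose_power_left pcompose_pCons)
  moreover have "poly (pcompose q [:c, 1:]) 0 \<noteq> 0"
    using q(2) by (simp add: poly_pcompose poly_eq_0_iff_dvd)
  ultimately show ?thesis by (rule order_eq_of_factorization)
qed

lemma higher_pderiv_pcompose_shift:
  "(pderiv ^^ j) (pcompose p [:a, 1:]) = pcompose ((pderiv ^^ j) p) [:a, 1:]"
  by (induction j) (simp_all add: pderiv_pcompose pderiv_pCons)

lemma order_higher_pderiv:
  fixes p :: "'a::field_char_0 poly"
  assumes "p \<noteq> 0" "j < order c p"
  shows "(pderiv ^^ j) p \<noteq> 0 \<and> order c ((pderiv ^^ j) p) = order c p - j"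
  using assms(2)
proof (induction j)
  case (Suc j)
  let ?q = "(pderiv ^^ j) p"
  have q: "?q \<noteq> 0" "order c ?q = order c p - j" using Suc by auto
  then have "poly ?q c = 0" using Suc.prems order_root by force
  then have "order c ?q = Suc (order c (pderiv ?q))" using order_pderiv[OF q(1)] by blast
  moreover have "pderiv ?q \<noteq> 0"
    using order_degree[OF q(1), of c] q(2) Suc.prems by (simp add: pderiv_eq_0_iff)
  ultimately show ?case using q(2) by simp
qed (use assms in simp)

lemma order_1_imp_simple_root:
  fixes p :: "'a::field_char_0 poly"
  assumes "p \<noteq> 0" "order c p = 1"
  shows "poly p c = 0 \<and> poly (pderiv p) c \<noteq> 0"
proof -
  have r: "poly p c = 0" using assms order_root by force
  then have "order c (pderiv p) = 0" using order_pderiv[OF assms(1) r] assms(2) by simp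
  moreover have "pderiv p \<noteq> 0"
    using order_degree[OF assms(1), of c] assms(2) by (simp add: pderiv_eq_0_iff)
  ultimately show ?thesis using r order_eq_0_iff by blast
qed

lemma coeff_less_order_0:
  assumes "i < order 0 p"
  shows "coeff p i = 0"
proof (cases "p = 0")
  case False
  then have "monom 1 (order 0 p) dvd p" by (simp add: monom_1_dvd_iff)
  then show ?thesis using assms monom_1_dvd_iff' by blast
qed simp

lemma coeff_order_0_nonzero:
  assumes "p \<noteq> 0"
  shows "coeff p (order 0 p) \<noteq> 0"
proof
  assume "coeff p (order 0 p) = 0"
  then have "\<forall>i<Suc (order 0 p). coeff p i = 0"
    using coeff_less_order_0 less_Suc_eq by blast
  then have "monom 1 (Suc (order 0 p)) dvd p" by (simp add: monom_1_dvd_iff')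
  then show False using assms by (simp add: monom_1_dvd_iff)
qed

lemma pochhammer_of_nat_nonzero: "pochhammer (of_nat (Suc m) :: 'a::field_char_0) n \<noteq> 0"
  using pochhammer_pos[of "Suc m" n] by (simp only: pochhammer_of_nat of_nat_eq_0_iff) simp

text \<open>A polynomial whose roots all coincide is \<open>a (x - c) ^ k\<close>; if its coefficient of
  \<open>x ^ (k - 1)\<close> vanishes, then \<open>c = 0\<close>.\<close>

lemma exists_root_order_less_degree:
  fixes R :: "'a::{alg_closed_field,field_char_0} poly"
  assumes deg: "degree R = k" "k \<ge> 2" and sub: "coeff R (k - 1) = 0"
    and i0: "i0 < k" "coeff R i0 \<noteq> 0"
  shows "\<exists>c. poly R c = 0 \<and> order c R < k"
proof -
  have R: "R \<noteq> 0" using i0 by auto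
  obtain c where c: "poly R c = 0"
    using alg_closed_imp_poly_has_root[of R] deg by auto
  have "order c R < k"
  proof (rule ccontr)
    assume "\<not> order c R < k"
    then have ord: "order c R = k" using order_degree[OF R, of c] deg by simp
    define lc where "lc = pochhammer 2 (k - 1) * coeff R k"
    have "lc \<noteq> 0"
      using pochhammer_of_nat_nonzero[of 1 "k - 1", where 'a = 'a] R deg(1)
      by (auto simp: lc_def numeral_2_eq_2)
    have "(pderiv ^^ (k - 1)) R = [:0, lc:]"
    proof (rule poly_eqI)
      fix n
      show "coeff ((pderiv ^^ (k - 1)) R) n = coeff [:0, lc:] n"
      proof (cases "n \<ge> 2")
        case True
        then have "degree R < n + (k - 1)" using deg by simp
        then show ?thesis using True by (simp add: coeff_higher_pderiv coeff_eq_0 coeff_pCons split: nat.split)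
      next
        case False
        then consider "n = 0" | "n = 1" by linarith
        then show ?thesis
          using sub deg by cases (simp_all add: coeff_higher_pderiv lc_def numeral_2_eq_2)
      qed
    qed
    moreover have "poly ((pderiv ^^ (k - 1)) R) c = 0"
      using order_higher_pderiv[OF R, of "k - 1" c] order_1_imp_simple_root ord deg by auto
    ultimately have "c = 0" using \<open>lc \<noteq> 0\<close> by simp
    then show False using coeff_less_order_0[of i0 R] ord i0 by simp
  qed
  with c show ?thesis by blast
qed

text \<open>Moving to a root of the \<open>(k - 1)\<close>-st derivative kills the coefficient of \<open>x ^ (k - 1)\<close>.\<close>

lemma shift_to_kill_subleading_coeff:
  fixes G :: "'a::field_char_0 fps poly"
  assumes G: "residue_poly G \<noteq> 0" and k: "order c (residue_poly G) = k" "k \<ge> 2"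
  obtains \<zeta> where "\<zeta> $ 0 = c" "coeff (pcompose G [:\<zeta>, 1:]) (k - 1) = 0"
    "residue_poly (pcompose G [:\<zeta>, 1:]) \<noteq> 0" "order 0 (residue_poly (pcompose G [:\<zeta>, 1:])) = k"
proof -
  define D where "D = (pderiv ^^ (k - 1)) G"
  have "residue_poly D = (pderiv ^^ (k - 1)) (residue_poly G)"
    by (simp add: D_def fps_residue.map_poly_hom_higher_pderiv)
  then have "residue_poly D \<noteq> 0 \<and> order c (residue_poly D) = 1"
    using order_higher_pderiv[OF G, of "k - 1" c] k by auto
  then obtain \<zeta> where \<zeta>: "poly D \<zeta> = 0" "\<zeta> $ 0 = c"
    using order_1_imp_simple_root hensel_simple_root by metis
  let ?G = "pcompose G [:\<zeta>, 1:]"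
  have "pochhammer 1 (k - 1) * coeff ?G (k - 1) = coeff ((pderiv ^^ (k - 1)) ?G) 0"
    by (simp add: coeff_higher_pderiv)
  also have "\<dots> = poly D \<zeta>"
    by (simp add: D_def higher_pderiv_pcompose_shift poly_0_coeff_0[symmetric] poly_pcompose)
  finally have "coeff ?G (k - 1) = 0"
    using \<zeta>(1) by (simp add: pochhammer_fact[symmetric])
  moreover have res: "residue_poly ?G = pcompose (residue_poly G) [:c, 1:]"
    by (simp add: fps_residue.map_poly_hom_pcompose fps_residue.map_poly_hom_linear \<zeta>(2))
  then have "residue_poly ?G \<noteq> 0" using G by (simp add: pcompose_eq_0_iff)
  moreover have "order 0 (residue_poly ?G) = k" using order_pcompose_shift[OF G] k(1) by (simp add: res)
  ultimately show ?thesis using that \<zeta>(2) by blast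
qed

text \<open>The first edge of the Newton polygon: \<open>i0\<close> minimises \<open>subdegree (g i) / (k - i)\<close>.\<close>

lemma newton_polygon_first_edge:
  fixes g :: "nat \<Rightarrow> 'a::zero fps"
  assumes "g 0 \<noteq> 0" "k > 0" "\<And>i. i < k \<Longrightarrow> g i $ 0 = 0"
  obtains i0 where "i0 < k" "g i0 \<noteq> 0" "subdegree (g i0) > 0"
    "\<And>i. i < k \<Longrightarrow> g i \<noteq> 0 \<Longrightarrow> subdegree (g i0) * (k - i) \<le> (k - i0) * subdegree (g i)"
proof -
  define I where "I = {i. i < k \<and> g i \<noteq> 0}"
  define slope :: "nat \<Rightarrow> rat" where "slope i = of_nat (subdegree (g i)) / of_nat (k - i)" for i
  define i0 where "i0 = arg_min_on slope I"
  have I: "finite I" "I \<noteq> {}" using assms by (auto simp: I_def intro!: exI[of _ 0])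
  then have i0: "i0 < k" "g i0 \<noteq> 0" using arg_min_if_finite(1)[OF I] by (auto simp: i0_def I_def)
  have "subdegree (g i0) * (k - i) \<le> (k - i0) * subdegree (g i)" if "i < k" "g i \<noteq> 0" for i
  proof -
    have "slope i0 \<le> slope i"
      unfolding i0_def using I that by (intro arg_min_least) (auto simp: I_def)
    then have "(of_nat (subdegree (g i0) * (k - i)) :: rat) \<le> of_nat ((k - i0) * subdegree (g i))"
      using i0 that by (simp add: slope_def divide_le_eq le_divide_eq field_simps)
    then show ?thesis by (simp only: of_nat_le_iff)
  qed
  moreover have "subdegree (g i0) > 0"
    using i0 assms(3)[OF i0(1)] by (metis gr0I subdegree_eq_0_iff)
  ultimately show ?thesis using that i0 by blast
qed

lemma newton_polygon_scaled_coeff_low: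
  fixes g :: "'a::comm_ring_1 fps"
  assumes q: "q > 0" and edge: "i < k \<Longrightarrow> g \<noteq> 0 \<Longrightarrow> p * (k - i) \<le> q * subdegree g"
    and j: "j < p * k"
  shows "(fps_X ^ (p * i) * (g oo fps_X ^ q)) $ j = 0"
proof (cases "j < p * i \<or> g = 0")
  case False
  have "i < k"
  proof (rule ccontr)
    assume "\<not> i < k"
    then have "p * k \<le> p * i" by simp
    then show False using j False by linarith
  qed
  have "p * k = p * i + p * (k - i)" using \<open>i < k\<close> by (simp add: diff_mult_distrib2)
  then have "j - p * i < p * (k - i)" using j False by linarith
  also have "\<dots> \<le> q * subdegree g" using edge \<open>i < k\<close> False by blast
  finally have "(g oo fps_X ^ q) $ (j - p * i) = 0"
    using q by (auto simp: fps_compose_X_power_nth elim!: dvdE)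
  then show ?thesis using False by (simp add: fps_X_power_mult_nth)
qed (auto simp: fps_X_power_mult_nth)

lemma newton_polygon_rescaling:
  fixes G :: "'a::{alg_closed_field,field_char_0} fps poly"
  assumes G: "residue_poly G \<noteq> 0" and k: "order 0 (residue_poly G) = k" "k \<ge> 2"
    and sub: "coeff G (k - 1) = 0" and G0: "coeff G 0 \<noteq> 0"
  obtains p q H c where "p > 0" "q > 0"
    "pcompose (map_poly (\<lambda>P. P oo fps_X ^ q) G) [:0, fps_X ^ p:] = smult (fps_X ^ (p * k)) H"
    "residue_poly H \<noteq> 0" "poly (residue_poly H) c = 0" "order c (residue_poly H) < k"
proof -
  define g where "g = coeff G"
  have g_res: "g i $ 0 = coeff (residue_poly G) i" for i by (simp add: g_def coeff_map_poly)
  have g_low: "g i $ 0 = 0" if "i < k" for i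
    using coeff_less_order_0[of i "residue_poly G"] that k by (simp add: g_res)
  have g_k: "g k $ 0 \<noteq> 0" using coeff_order_0_nonzero[OF G] k by (simp add: g_res)
  obtain i0 where i0: "i0 < k" "g i0 \<noteq> 0" "subdegree (g i0) > 0"
    and edge: "\<And>i. i < k \<Longrightarrow> g i \<noteq> 0 \<Longrightarrow> subdegree (g i0) * (k - i) \<le> (k - i0) * subdegree (g i)"
    using newton_polygon_first_edge[of g k] G0 g_low k(2) by (auto simp: g_def)
  define p where "p = subdegree (g i0)"
  define q where "q = k - i0"
  have pq: "p > 0" "q > 0" using i0 by (simp_all add: p_def q_def)
  define S where "S = pcompose (map_poly (\<lambda>P. P oo fps_X ^ q) G) [:0, fps_X ^ p:]"
  have coeff_S: "coeff S i = fps_X ^ (p * i) * (g i oo fps_X ^ q)" for i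
    by (simp add: S_def coeff_pcompose_linear coeff_map_poly g_def power_mult)
  define H where "H = map_poly (fps_shift (p * k)) S"
  have S_H: "S = smult (fps_X ^ (p * k)) H"
    unfolding H_def
  proof (rule smult_X_power_shift_poly)
    fix i j assume "j < p * k"
    show "coeff S i $ j = 0"
      unfolding coeff_S
      by (rule newton_polygon_scaled_coeff_low[OF pq(2) _ \<open>j < p * k\<close>])
         (use edge in \<open>simp add: p_def q_def\<close>)
  qed
  have coeff_res_H: "coeff (residue_poly H) i = (fps_X ^ (p * i) * (g i oo fps_X ^ q)) $ (p * k)" for i
    by (simp add: H_def coeff_map_poly coeff_S)
  have H_k: "coeff (residue_poly H) k \<noteq> 0" using g_k pq by (simp add: coeff_res_H fps_X_power_mult_nth)
  have "degree (residue_poly H) = k"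
  proof (rule antisym)
    show "degree (residue_poly H) \<le> k"
      by (rule degree_le) (use pq in \<open>auto simp: coeff_res_H fps_X_power_mult_nth\<close>)
  qed (rule le_degree[OF H_k])
  moreover have "coeff (residue_poly H) (k - 1) = 0" using sub by (simp add: coeff_res_H g_def)
  moreover have "coeff (residue_poly H) i0 \<noteq> 0"
  proof -
    have "p * k - p * i0 = q * p" using i0 by (simp add: q_def diff_mult_distrib2 mult.commute)
    then have "coeff (residue_poly H) i0 = g i0 $ p"
      using i0 pq by (simp add: coeff_res_H fps_X_power_mult_nth)
    then show ?thesis using i0 by (simp add: p_def)
  qed
  ultimately obtain c where "poly (residue_poly H) c = 0" "order c (residue_poly H) < k"
    using exists_root_order_less_degree[of "residue_poly H" k i0] k i0 by blast
  moreover have "residue_poly H \<noteq> 0" using H_k by auto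
  ultimately show ?thesis using that[OF pq S_H[unfolded S_def]] by blast
qed

lemma ramified_root_of_rescaled:
  fixes G :: "'a::idom fps poly"
  assumes scaled: "pcompose (map_poly (\<lambda>P. P oo fps_X ^ q) (pcompose G [:\<zeta>, 1:])) [:0, fps_X ^ p:]
                     = smult (fps_X ^ n) H"
    and q: "q > 0" "q' > 0" and r: "poly (map_poly (\<lambda>P. P oo fps_X ^ q') H) r = 0"
  shows "poly (map_poly (\<lambda>P. P oo fps_X ^ (q * q')) G) ((\<zeta> oo fps_X ^ (q * q')) + fps_X ^ (p * q') * r) = 0"
proof -
  interpret ramify: idom_hom "\<lambda>P :: 'a fps. P oo fps_X ^ q"
    using q(1) by (rule idom_hom_fps_compose_X_power)
  interpret ramify': idom_hom "\<lambda>P :: 'a fps. P oo fps_X ^ q'"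
    using q(2) by (rule idom_hom_fps_compose_X_power)
  have "map_poly (\<lambda>P. P oo fps_X ^ q) (pcompose G [:\<zeta>, 1:])
      = pcompose (map_poly (\<lambda>P. P oo fps_X ^ q) G) [:\<zeta> oo fps_X ^ q, 1:]"
    by (simp add: ramify.map_poly_hom_pcompose ramify.map_poly_hom_linear)
  then have "poly (map_poly (\<lambda>P. P oo fps_X ^ q') (smult (fps_X ^ n) H)) r
      = poly (map_poly (\<lambda>P. P oo fps_X ^ (q * q')) G) ((\<zeta> oo fps_X ^ (q * q')) + fps_X ^ (p * q') * r)"
    using q by (simp add: scaled[symmetric] poly_ramified_shift_rescale
        map_poly_compose_X_power_assoc fps_compose_X_power_assoc)
  moreover have "poly (map_poly (\<lambda>P. P oo fps_X ^ q') (smult (fps_X ^ n) H)) r = 0"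
    using r by (simp add: ramify'.map_poly_hom_smult)
  ultimately show ?thesis by simp
qed

text \<open>Induction on the multiplicity \<open>k\<close> of \<open>c\<close>: simple roots lift by Hensel's lemma; otherwise one
  translates to kill the coefficient of \<open>x ^ (k - 1)\<close> and rescales along the first edge of
  the Newton polygon, after which the new residue polynomial has only roots of
  multiplicity \<open>< k\<close>.\<close>

theorem newton_puiseux_root:
  fixes G :: "'a::{alg_closed_field,field_char_0} fps poly"
  assumes "residue_poly G \<noteq> 0" "poly (residue_poly G) c = 0"
  shows "\<exists>q r. q > 0 \<and> poly (map_poly (\<lambda>P. P oo fps_X ^ q) G) r = 0 \<and> r $ 0 = c"
proof -
  have "order c (residue_poly G) \<noteq> 0" using assms order_root by blast
  then have "order c (residue_poly G) \<ge> 1" by simp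
  then show ?thesis using assms(1)
  proof (induction "order c (residue_poly G)" arbitrary: G c rule: less_induct)
    case less
    define k where "k = order c (residue_poly G)"
    show ?case
    proof (cases "k = 1")
      case True
      then obtain r where "poly G r = 0" "r $ 0 = c"
        using order_1_imp_simple_root[OF less.prems(2)] hensel_simple_root unfolding k_def by blast
      then show ?thesis by (intro exI[where x = "1::nat"] exI[where x = r]) simp
    next
      case False
      then have k2: "k \<ge> 2" using less.prems(1) by (simp add: k_def)
      obtain \<zeta> where \<zeta>: "\<zeta> $ 0 = c" and sub: "coeff (pcompose G [:\<zeta>, 1:]) (k - 1) = 0"
        and G': "residue_poly (pcompose G [:\<zeta>, 1:]) \<noteq> 0" "order 0 (residue_poly (pcompose G [:\<zeta>, 1:])) = k"
        using shift_to_kill_subleading_coeff[OF less.prems(2) k_def[symmetric] k2] by blast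
      show ?thesis
      proof (cases "coeff (pcompose G [:\<zeta>, 1:]) 0 = 0")
        case True
        then have "poly G \<zeta> = 0" by (simp add: poly_0_coeff_0[symmetric] poly_pcompose)
        then show ?thesis using \<zeta> by (intro exI[where x = "1::nat"] exI[where x = \<zeta>]) simp
      next
        case False
        obtain p q H c' where pq: "p > 0" "q > 0"
          and scaled: "pcompose (map_poly (\<lambda>P. P oo fps_X ^ q) (pcompose G [:\<zeta>, 1:])) [:0, fps_X ^ p:]
                        = smult (fps_X ^ (p * k)) H"
          and H: "residue_poly H \<noteq> 0" "poly (residue_poly H) c' = 0" "order c' (residue_poly H) < k"
          using newton_polygon_rescaling[OF G' k2 sub False] by blast
        have "order c' (residue_poly H) \<noteq> 0" using H order_root by blast
        then have "order c' (residue_poly H) \<ge> 1" by simp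
        then obtain q' r' where q': "q' > 0" and r': "poly (map_poly (\<lambda>P. P oo fps_X ^ q') H) r' = 0"
          "r' $ 0 = c'"
          using less.hyps[OF H(3)[unfolded k_def]] H(1) by blast
        define \<xi> where "\<xi> = (\<zeta> oo fps_X ^ (q * q')) + fps_X ^ (p * q') * r'"
        have "poly (map_poly (\<lambda>P. P oo fps_X ^ (q * q')) G) \<xi> = 0"
          unfolding \<xi>_def using scaled pq(2) q' r'(1) by (rule ramified_root_of_rescaled)
        moreover have "\<xi> $ 0 = c" using \<zeta> pq q' by (simp add: \<xi>_def fps_X_power_mult_nth)
        ultimately show ?thesis using pq q' by (intro exI[where x = "q * q'"] exI[where x = \<xi>]) simp
      qed
    qed
  qed
qed

section \<open>Puiseux series at a fixed level\<close>

lemma level_pos: "level N \<phi> \<Longrightarrow> N > 0"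
  by (simp add: level_def)

lemma level_dvd:
  assumes "level N \<phi>" "N dvd M" "M > 0"
  shows "level M \<phi>"
  unfolding level_def
proof (intro conjI allI impI)
  obtain k where M: "M = N * k" using assms(2) by blast
  fix q assume "\<phi> q \<noteq> 0"
  then obtain j :: nat where "q = of_nat j / of_nat N" using assms(1) by (auto simp: level_def)
  then have "q = of_nat (j * k) / of_nat M" using M assms(3) by simp
  then show "\<exists>k'::nat. q = of_nat k' / of_nat M" by blast
qed (fact assms(3))

lemma level_mult: "level N \<phi> \<Longrightarrow> k > 0 \<Longrightarrow> level (N * k) \<phi>"
  by (rule level_dvd) (auto dest: level_pos)

lemma level_subsupport: "level N \<phi> \<Longrightarrow> (\<And>q. \<psi> q \<noteq> 0 \<Longrightarrow> \<phi> q \<noteq> 0) \<Longrightarrow> level N \<psi>"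
  by (auto simp: level_def)

lemma level_diff: "level N \<phi> \<Longrightarrow> level M \<psi> \<Longrightarrow> level (N * M) (\<lambda>q. \<phi> q - \<psi> q)"
  unfolding level_def by (metis level_def level_mult mult.commute right_minus_eq)

lemma NP_roots_level: "\<phi> \<in> NP_roots f \<Longrightarrow> level (den \<phi>) \<phi> \<and> \<phi> 0 = 0"
  unfolding NP_roots_def puiseux_def den_def by (auto intro: someI)

lemma rat_frac_eq_frac_mult:
  assumes "N > 0" "k > 0" "(of_nat n :: rat) / of_nat (N * k) = of_nat j / of_nat N"
  shows "n = j * k"
proof -
  have "(of_nat n :: rat) = of_nat (j * k)" using assms by (simp add: field_simps)
  then show ?thesis by (simp only: of_nat_eq_iff)
qed

lemma to_fps_mult_level:
  assumes "level N \<phi>" "k > 0"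
  shows "to_fps (N * k) \<phi> = to_fps N \<phi> oo fps_X ^ k"
proof (rule fps_ext)
  fix n
  have N: "N > 0" using assms(1) by (rule level_pos)
  show "to_fps (N * k) \<phi> $ n = (to_fps N \<phi> oo fps_X ^ k) $ n"
  proof (cases "k dvd n")
    case True
    then obtain j where "n = k * j" by blast
    then show ?thesis using N assms(2) by (simp add: to_fps_def)
  next
    case False
    have "\<phi> (of_nat n / of_nat (N * k)) = 0"
    proof (rule ccontr)
      assume "\<phi> (of_nat n / of_nat (N * k)) \<noteq> 0"
      then obtain j :: nat where "of_nat n / of_nat (N * k) = (of_nat j / of_nat N :: rat)"
        using assms(1) by (auto simp: level_def)
      then have "n = j * k" by (rule rat_frac_eq_frac_mult[OF N assms(2)])
      with False show False by simp
    qed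
    then have "to_fps (N * k) \<phi> $ n = 0" by (simp only: to_fps_def fps_nth_Abs_fps)
    then show ?thesis using False assms(2) by (simp add: fps_compose_X_power_nth)
  qed
qed

lemma of_fps_nth: "N > 0 \<Longrightarrow> of_fps N P (of_nat n / of_nat N) = P $ n"
  by (auto simp: of_fps_def)

lemma of_fps_outside: "(\<forall>n::nat. q \<noteq> of_nat n / of_nat N) \<Longrightarrow> of_fps N P q = 0"
  by (auto simp: of_fps_def)

lemma of_fps_cases:
  "N > 0 \<Longrightarrow> of_fps N P q = 0 \<or> (\<exists>n. q = of_nat n / of_nat N \<and> of_fps N P q = P $ n)"
  by (cases "\<exists>n::nat. q = of_nat n / of_nat N") (auto simp: of_fps_nth of_fps_outside)

lemma level_of_fps: "N > 0 \<Longrightarrow> level N (of_fps N P)"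
  unfolding level_def using of_fps_cases by metis

lemma to_fps_of_fps: "N > 0 \<Longrightarrow> to_fps N (of_fps N P) = P"
  by (simp add: to_fps_def of_fps_nth fps_eq_iff)

lemma of_fps_to_fps:
  assumes "level N \<phi>"
  shows "of_fps N (to_fps N \<phi>) = \<phi>"
proof
  fix q
  show "of_fps N (to_fps N \<phi>) q = \<phi> q"
    using assms level_pos[OF assms]
    by (cases "\<exists>n::nat. q = of_nat n / of_nat N")
       (auto simp: of_fps_nth of_fps_outside to_fps_def level_def)
qed

lemma of_fps_0: "of_fps N 0 = (\<lambda>_. 0)"
  by (auto simp: of_fps_def)

lemma of_fps_eq_0_iff:
  assumes "N > 0"
  shows "of_fps N P = (\<lambda>_. 0) \<longleftrightarrow> P = 0"
proof
  assume "of_fps N P = (\<lambda>_. 0)"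
  then have "to_fps N (of_fps N P) = to_fps N (of_fps N 0)" by (simp add: of_fps_0)
  then show "P = 0" using assms by (simp add: to_fps_of_fps)
qed (simp add: of_fps_0)

lemma of_fps_compose_X_power:
  assumes N: "N > 0" and k: "k > 0"
  shows "of_fps (N * k) (P oo fps_X ^ k) = of_fps N P"
proof
  fix q
  show "of_fps (N * k) (P oo fps_X ^ k) q = of_fps N P q"
  proof (cases "\<exists>n::nat. q = of_nat n / of_nat (N * k)")
    case True
    then obtain n where n: "q = of_nat n / of_nat (N * k)" by blast
    have "of_fps (N * k) (P oo fps_X ^ k) q = (P oo fps_X ^ k) $ n"
      unfolding n by (rule of_fps_nth) (use N k in simp)
    also have "\<dots> = of_fps N P q"
    proof (cases "k dvd n")
      case True
      then obtain j where j: "n = k * j" by blast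
      then show ?thesis using n N k of_fps_nth[OF N, of P j] by simp
    next
      case False
      have "q \<noteq> of_nat j / of_nat N" for j :: nat
        using False n rat_frac_eq_frac_mult[OF N k, of n j] by auto
      then show ?thesis using False k by (simp add: of_fps_outside fps_compose_X_power_nth)
    qed
    finally show ?thesis .
  next
    case False
    have "q \<noteq> of_nat j / of_nat N" for j :: nat
      using False[simplified, rule_format, of "j * k"] N k by auto
    then show ?thesis using False by (simp add: of_fps_outside)
  qed
qed

text \<open>The objects defined through \<open>den\<close> can be computed at any level of the series.\<close>

lemma of_fps_level_independent:
  assumes E: "\<And>N k. level N \<phi> \<Longrightarrow> k > 0 \<Longrightarrow> E (N * k) = E N oo fps_X ^ k"
    and N: "level N \<phi>" and M: "level M \<phi>"
  shows "of_fps N (E N) = of_fps M (E M)"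
proof -
  have N0: "N > 0" and M0: "M > 0" using N M level_pos by blast+
  have "of_fps N (E N) = of_fps (N * M) (E (N * M))"
    using of_fps_compose_X_power[OF N0 M0] E[OF N M0] by simp
  also have "\<dots> = of_fps (M * N) (E (M * N))" by (simp add: mult.commute)
  also have "\<dots> = of_fps M (E M)"
    using of_fps_compose_X_power[OF M0 N0] E[OF M N0] by simp
  finally show ?thesis .
qed

lemma yfps_0 [simp]: "yfps N 0 = 0"
  by (simp add: yfps_def fps_eq_iff)

lemma yfps_eq_compose:
  "N > 0 \<Longrightarrow> yfps N a = fps_of_poly (map_poly of_real a) oo fps_X ^ N"
  by (auto simp: fps_eq_iff yfps_def fps_compose_X_power_nth coeff_map_poly)

lemma idom_hom_yfps:
  assumes "N > 0"
  shows "idom_hom (yfps N)"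
proof -
  have "yfps N = (\<lambda>P. P oo fps_X ^ N) \<circ> fps_of_poly \<circ> map_poly of_real"
    using assms by (auto simp: yfps_eq_compose)
  moreover have "idom_hom ((\<lambda>P. P oo fps_X ^ N) \<circ> fps_of_poly \<circ> map_poly (of_real :: real \<Rightarrow> complex))"
    by (intro idom_hom_comp idom_hom_fps_compose idom_hom_fps_of_poly idom_hom_map_poly
        idom_hom_of_real) (use assms in \<open>simp add: fps_X_power_nth\<close>)
  ultimately show ?thesis by simp
qed

lemma lift_mult_level:
  assumes "N > 0" "k > 0"
  shows "lift (N * k) f = map_poly (\<lambda>P. P oo fps_X ^ k) (lift N f)"
proof -
  have "yfps (N * k) = (\<lambda>P. P oo fps_X ^ k) \<circ> yfps N"
    using assms by (auto simp: yfps_eq_compose fps_compose_X_power_assoc)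
  then show ?thesis unfolding lift_def by (simp add: map_poly_map_poly)
qed

lemma peval_level:
  assumes "level N \<phi>"
  shows "peval f \<phi> = of_fps N (poly (lift N f) (to_fps N \<phi>))"
  unfolding peval_def
proof (rule of_fps_level_independent[where \<phi> = \<phi>])
  fix N k assume L: "level N \<phi>" and k: "(k::nat) > 0"
  interpret idom_hom "\<lambda>P :: complex fps. P oo fps_X ^ k"
    using k by (rule idom_hom_fps_compose_X_power)
  show "poly (lift (N * k) f) (to_fps (N * k) \<phi>) = poly (lift N f) (to_fps N \<phi>) oo fps_X ^ k"
    using L k level_pos[OF L] by (simp add: lift_mult_level to_fps_mult_level poly_map_poly_hom)
qed (use assms in \<open>auto simp: den_def intro: someI\<close>)

lemma shift_coeff_level:
  assumes "level N \<phi>"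
  shows "shift_coeff f \<phi> i = of_fps N (coeff (pcompose (lift N f) [:to_fps N \<phi>, 1:]) i)"
  unfolding shift_coeff_def
proof (rule of_fps_level_independent[where \<phi> = \<phi>])
  fix N k assume L: "level N \<phi>" and k: "(k::nat) > 0"
  interpret idom_hom "\<lambda>P :: complex fps. P oo fps_X ^ k"
    using k by (rule idom_hom_fps_compose_X_power)
  show "coeff (pcompose (lift (N * k) f) [:to_fps (N * k) \<phi>, 1:]) i
      = coeff (pcompose (lift N f) [:to_fps N \<phi>, 1:]) i oo fps_X ^ k"
    using L k level_pos[OF L]
    by (simp add: lift_mult_level to_fps_mult_level map_poly_hom_linear[symmetric]
        map_poly_hom_pcompose[symmetric] coeff_map_poly)
qed (use assms in \<open>auto simp: den_def intro: someI\<close>)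

lemma mem_NP_roots_iff:
  assumes "level N \<phi>" "\<phi> 0 = 0"
  shows "\<phi> \<in> NP_roots f \<longleftrightarrow> poly (lift N f) (to_fps N \<phi>) = 0"
  using assms peval_level[OF assms(1)] of_fps_eq_0_iff[OF level_pos[OF assms(1)]]
  by (auto simp: NP_roots_def puiseux_def)

lemma yfps_nonzero:
  assumes "N > 0" "a \<noteq> 0"
  shows "yfps N a \<noteq> 0"
proof -
  obtain n where "coeff a n \<noteq> 0" using assms(2) by (meson leading_coeff_0_iff)
  then have "yfps N a $ (N * n) \<noteq> 0" using assms(1) by (simp add: yfps_def)
  then show ?thesis by auto
qed

lemma lift_nonzero: "N > 0 \<Longrightarrow> f \<noteq> 0 \<Longrightarrow> lift N f \<noteq> 0"
  unfolding lift_def by (subst map_poly_eq_0_iff) (auto simp: yfps_nonzero)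

lemma degree_lift: "N > 0 \<Longrightarrow> degree (lift N f) = degree f"
  unfolding lift_def by (rule degree_map_poly) (simp add: yfps_nonzero)

lemma mult_root_level:
  assumes "f \<noteq> 0" "puiseux \<gamma>" "level N \<gamma>"
  shows "mult_root f \<gamma> = order (to_fps N \<gamma>) (lift N f)"
proof -
  have order_mult_level: "order (to_fps (K * k) \<gamma>) (lift (K * k) f) = order (to_fps K \<gamma>) (lift K f)"
    if L: "level K \<gamma>" and k: "k > 0" for K k
  proof -
    interpret idom_hom "\<lambda>P :: complex fps. P oo fps_X ^ k"
      using k by (rule idom_hom_fps_compose_X_power)
    have "order (to_fps K \<gamma> oo fps_X ^ k) (map_poly (\<lambda>P. P oo fps_X ^ k) (lift K f))
        = order (to_fps K \<gamma>) (lift K f)"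
      by (rule order_map_poly_hom) (use k lift_nonzero level_pos[OF L] assms(1) in auto)
    then show ?thesis using L k level_pos[OF L] by (simp add: to_fps_mult_level lift_mult_level)
  qed
  let ?M = "den \<gamma>"
  have M: "level ?M \<gamma>" using assms(2) unfolding puiseux_def den_def by (auto intro: someI)
  let ?P = "lift ?M f" and ?G = "to_fps ?M \<gamma>"
  have "?P \<noteq> 0" using lift_nonzero assms(1) level_pos[OF M] by blast
  then obtain q where q: "?P = [:- ?G, 1:] ^ order ?G ?P * q" "\<not> [:- ?G, 1:] dvd q"
    using order_decomp by blast
  have "mult_root f \<gamma> = order ?G ?P"
    unfolding mult_root_def
  proof (rule Greatest_equality)
    show "\<exists>h. ?P = [:- ?G, 1:] ^ order ?G ?P * h \<and> poly h ?G \<noteq> 0"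
      using q by (auto simp: poly_eq_0_iff_dvd)
  qed (metis order_eq_of_factorization order.refl)
  also have "\<dots> = order (to_fps (?M * N) \<gamma>) (lift (?M * N) f)"
    using order_mult_level[OF M level_pos[OF assms(3)]] by simp
  also have "\<dots> = order (to_fps N \<gamma>) (lift N f)"
    using order_mult_level[OF assms(3) level_pos[OF M]] by (simp add: mult.commute)
  finally show ?thesis .
qed

lemma pord_eq_subdegree:
  assumes "level N \<phi>" "\<phi> \<noteq> (\<lambda>_. 0)"
  shows "pord \<phi> = of_nat (subdegree (to_fps N \<phi>)) / of_nat N"
proof -
  let ?s = "subdegree (to_fps N \<phi>)"
  have "to_fps N \<phi> \<noteq> 0" using assms of_fps_to_fps[OF assms(1)] by (metis of_fps_0)
  then have "to_fps N \<phi> $ ?s \<noteq> 0" by (rule nth_subdegree_nonzero)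
  then have nz: "\<phi> (of_nat ?s / of_nat N) \<noteq> 0" by (simp add: to_fps_def)
  show ?thesis
    unfolding pord_def
  proof (rule Least_equality)
    fix q assume q: "\<phi> q \<noteq> 0"
    then obtain j :: nat where j: "q = of_nat j / of_nat N" using assms by (auto simp: level_def)
    then have "?s \<le> j" using q by (intro subdegree_leI) (simp add: to_fps_def)
    then show "of_nat ?s / of_nat N \<le> q" using j by (simp add: divide_right_mono)
  qed (fact nz)
qed

lemma pord_le:
  assumes "level N \<phi>" "\<phi> q \<noteq> 0"
  shows "pord \<phi> \<le> q"
proof -
  obtain j :: nat where j: "q = of_nat j / of_nat N" using assms by (auto simp: level_def)
  then have "subdegree (to_fps N \<phi>) \<le> j" using assms(2) by (intro subdegree_leI) (simp add: to_fps_def)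
  moreover have "\<phi> \<noteq> (\<lambda>_. 0)" using assms(2) by auto
  ultimately show ?thesis using pord_eq_subdegree[OF assms(1)] j by (simp add: divide_right_mono)
qed

lemma pord_greaterI:
  assumes "level N \<phi>" "\<phi> \<noteq> (\<lambda>_. 0)" "\<And>q. q \<le> r \<Longrightarrow> \<phi> q = 0"
  shows "r < pord \<phi>"
proof -
  have "\<phi> (pord \<phi>) \<noteq> 0"
    using pord_eq_subdegree[OF assms(1,2)] assms(1,2) of_fps_to_fps[OF assms(1)] of_fps_0
    by (metis nth_subdegree_nonzero to_fps_def fps_nth_Abs_fps)
  then show ?thesis using assms(3) by (meson not_le)
qed

lemma pord_of_fps:
  assumes "N > 0" "P \<noteq> 0"
  shows "pord (of_fps N P) = of_nat (subdegree P) / of_nat N"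
  using pord_eq_subdegree[OF level_of_fps[OF assms(1)]] assms of_fps_eq_0_iff to_fps_of_fps
  by metis

lemma NP_roots_finite:
  assumes "f \<noteq> 0"
  shows "finite (NP_roots f)"
proof (rule ccontr)
  assume "infinite (NP_roots f)"
  then obtain A where A: "finite A" "card A = Suc (degree f)" "A \<subseteq> NP_roots f"
    using infinite_arbitrarily_large by blast
  define L where "L = (\<Prod>\<phi>\<in>A. den \<phi>)"
  have L0: "L > 0" unfolding L_def
    using A(3) NP_roots_level level_pos by (intro prod_pos) blast
  have lev: "level L \<phi>" if "\<phi> \<in> A" for \<phi>
  proof (rule level_dvd[OF _ _ L0])
    show "level (den \<phi>) \<phi>" using that A(3) NP_roots_level by blast
    show "den \<phi> dvd L" unfolding L_def using A(1) that by (rule dvd_prodI)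
  qed
  have "card A = card (to_fps L ` A)"
    using lev by (intro card_image[symmetric] inj_onI) (metis of_fps_to_fps)
  also have "\<dots> \<le> card {x. poly (lift L f) x = 0}"
  proof (rule card_mono)
    show "finite {x. poly (lift L f) x = 0}"
      by (rule poly_roots_finite[OF lift_nonzero[OF L0 assms]])
    show "to_fps L ` A \<subseteq> {x. poly (lift L f) x = 0}"
    proof clarify
      fix \<phi> assume "\<phi> \<in> A"
      then show "poly (lift L f) (to_fps L \<phi>) = 0"
        using A(3) lev mem_NP_roots_iff NP_roots_level by blast
    qed
  qed
  also have "\<dots> \<le> degree f"
    using card_poly_roots_bound[OF lift_nonzero[OF L0 assms]] degree_lift[OF L0] by simp
  finally show False using A(2) by simp
qed

section \<open>Roots agreeing with \<open>\<gamma>\<close> up to the contact order\<close>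

lemma contact_ge:
  assumes "f \<noteq> 0" "\<gamma>' \<in> NP_roots f" "\<gamma>' \<noteq> \<gamma>"
  shows "pord (\<lambda>q. \<gamma> q - \<gamma>' q) \<le> contact \<gamma> f"
  unfolding contact_def using assms NP_roots_finite[OF assms(1)] by (intro Max_ge) auto

lemma contact_attained:
  assumes "f \<noteq> 0" "\<exists>\<gamma>'\<in>NP_roots f. \<gamma>' \<noteq> \<gamma>"
  obtains \<gamma>' where "\<gamma>' \<in> NP_roots f" "\<gamma>' \<noteq> \<gamma>" "contact \<gamma> f = pord (\<lambda>q. \<gamma> q - \<gamma>' q)"
proof -
  have "contact \<gamma> f \<in> {pord (\<lambda>q. \<gamma> q - \<gamma>' q) | \<gamma>'. \<gamma>' \<in> NP_roots f \<and> \<gamma>' \<noteq> \<gamma>}"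
    unfolding contact_def using assms NP_roots_finite[OF assms(1)] by (intro Max_in) auto
  with that show ?thesis by blast
qed

lemma NP_root_eq_if_agrees_to_contact:
  assumes f: "f \<noteq> 0" and \<gamma>: "\<gamma> \<in> NP_roots f" and \<xi>: "\<xi> \<in> NP_roots f"
    and agree: "\<And>q. q \<le> contact \<gamma> f \<Longrightarrow> \<gamma> q = \<xi> q"
  shows "\<xi> = \<gamma>"
proof (rule ccontr)
  assume "\<xi> \<noteq> \<gamma>"
  then have "(\<lambda>q. \<gamma> q - \<xi> q) \<noteq> (\<lambda>_. 0)" by (metis (no_types) ext right_minus_eq)
  then have "contact \<gamma> f < pord (\<lambda>q. \<gamma> q - \<xi> q)"
    using NP_roots_level[OF \<gamma>] NP_roots_level[OF \<xi>] agree
    by (intro pord_greaterI[OF level_diff]) auto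
  with contact_ge[OF f \<xi> \<open>\<xi> \<noteq> \<gamma>\<close>] show False by simp
qed

lemma NP_roots_dvd:
  assumes "h dvd f" "\<xi> \<in> NP_roots h"
  shows "\<xi> \<in> NP_roots f"
proof -
  obtain k where f: "f = h * k" using assms(1) by blast
  have l: "level (den \<xi>) \<xi>" and z: "\<xi> 0 = 0" using NP_roots_level[OF assms(2)] by auto
  interpret idom_hom "yfps (den \<xi>)" by (rule idom_hom_yfps[OF level_pos[OF l]])
  show ?thesis
    using assms(2) mem_NP_roots_iff[OF l z] by (simp add: f lift_def map_poly_hom_mult)
qed

lemma level_truncated:
  assumes "level N \<gamma>"
  shows "level N (truncated \<gamma> f)"
  by (rule level_subsupport[OF assms]) (simp add: truncated_def split: if_splits)

lemma is_real_if_truncated_is_real: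
  assumes f: "f \<noteq> 0" and \<gamma>: "\<gamma> \<in> NP_roots f" and real: "is_real (truncated \<gamma> f)"
  shows "is_real \<gamma>"
proof -
  interpret conj: idom_hom "\<lambda>P :: complex fps. Abs_fps (\<lambda>n. cnj (P $ n))"
    by (rule idom_hom_fps_cnj)
  let ?M = "den \<gamma>"
  have l: "level ?M \<gamma>" and z: "\<gamma> 0 = 0" using NP_roots_level[OF \<gamma>] by auto
  define \<xi> where "\<xi> q = cnj (\<gamma> q)" for q
  have l': "level ?M \<xi>" using l by (rule level_subsupport) (simp add: \<xi>_def)
  have "(\<lambda>P. Abs_fps (\<lambda>n. cnj (P $ n))) \<circ> yfps ?M = yfps ?M"
    by (rule ext) (simp add: yfps_def fps_eq_iff)
  then have "map_poly (\<lambda>P. Abs_fps (\<lambda>n. cnj (P $ n))) (lift ?M f) = lift ?M f"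
    unfolding lift_def by (subst map_poly_map_poly) (simp_all add: fps_eq_iff)
  moreover have "to_fps ?M \<xi> = Abs_fps (\<lambda>n. cnj (to_fps ?M \<gamma> $ n))"
    by (simp add: \<xi>_def to_fps_def)
  ultimately have "poly (lift ?M f) (to_fps ?M \<xi>) = Abs_fps (\<lambda>n. cnj (poly (lift ?M f) (to_fps ?M \<gamma>) $ n))"
    by (metis conj.poly_map_poly_hom)
  then have "\<xi> \<in> NP_roots f"
    using \<gamma> mem_NP_roots_iff[OF l z] mem_NP_roots_iff[OF l'] z by (simp add: \<xi>_def fps_zero_def)
  moreover have "\<gamma> q = \<xi> q" if "q \<le> contact \<gamma> f" for q
    using real[unfolded is_real_def, rule_format, of q] that
    by (simp add: truncated_def \<xi>_def complex_eq_iff)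
  ultimately have "\<xi> = \<gamma>" by (rule NP_root_eq_if_agrees_to_contact[OF f \<gamma>])
  then show ?thesis unfolding is_real_def \<xi>_def by (metis Reals_cnj_iff complex_is_Real_iff)
qed

lemma NP_root_of_other_if_gcd_root_mod_contact:
  assumes f: "f \<noteq> 0" and \<gamma>: "\<gamma> \<in> NP_roots f"
    and mod: "NP_root_mod (gcd f g) (contact \<gamma> f) (truncated \<gamma> f)"
  shows "\<gamma> \<in> NP_roots g"
proof -
  let ?t = "truncated \<gamma> f"
  obtain \<xi> where \<xi>: "\<xi> \<in> NP_roots (gcd f g)" "\<xi> = ?t \<or> contact \<gamma> f < pord (\<lambda>y. ?t y - \<xi> y)"
    using mod by (auto simp: NP_root_mod_def)
  have "?t q = \<xi> q" if "q \<le> contact \<gamma> f" for q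
  proof (rule ccontr)
    assume "?t q \<noteq> \<xi> q"
    then have "pord (\<lambda>y. ?t y - \<xi> y) \<le> q"
      using level_truncated NP_roots_level[OF \<gamma>] NP_roots_level[OF \<xi>(1)]
      by (intro pord_le[OF level_diff]) auto
    with \<xi>(2) that \<open>?t q \<noteq> \<xi> q\<close> show False by auto
  qed
  then have "\<xi> = \<gamma>"
    using NP_root_eq_if_agrees_to_contact[OF f \<gamma> NP_roots_dvd[OF gcd_dvd1 \<xi>(1)]]
    by (simp add: truncated_def)
  then show ?thesis using NP_roots_dvd[OF gcd_dvd2 \<xi>(1)] by simp
qed

section \<open>The multiplicity formula\<close>

lemma fps_poly_factor_X_power:
  fixes Q :: "'a::idom fps poly"
  assumes "Q \<noteq> 0"
  obtains c W where "Q = smult (fps_X ^ c) W" "residue_poly W \<noteq> 0"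
proof -
  let ?T = "(\<lambda>i. subdegree (coeff Q i)) ` {i. coeff Q i \<noteq> 0}"
  define c where "c = Min ?T"
  have fin: "finite ?T"
    by (rule finite_imageI, rule finite_subset[of _ "{..degree Q}"]) (auto intro: le_degree)
  have "?T \<noteq> {}" using assms by (auto simp: poly_eq_iff)
  then obtain i0 where i0: "coeff Q i0 \<noteq> 0" "subdegree (coeff Q i0) = c"
    using Min_in[OF fin] unfolding c_def by auto
  have "Q = smult (fps_X ^ c) (map_poly (fps_shift c) Q)"
  proof (rule smult_X_power_shift_poly)
    fix i j assume "j < c"
    show "coeff Q i $ j = 0"
    proof (cases "coeff Q i = 0")
      case False
      then have "c \<le> subdegree (coeff Q i)" unfolding c_def using fin by (intro Min_le) auto
      with \<open>j < c\<close> show ?thesis by (intro nth_less_subdegree_zero) simp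
    qed simp
  qed
  moreover have "coeff Q i0 $ c \<noteq> 0" using i0 by (metis nth_subdegree_nonzero)
  then have "coeff (residue_poly (map_poly (fps_shift c) Q)) i0 \<noteq> 0"
    by (simp add: coeff_map_poly)
  then have "residue_poly (map_poly (fps_shift c) Q) \<noteq> 0" by auto
  ultimately show ?thesis using that by blast
qed

text \<open>Substituting \<open>x := \<Gamma>t + t ^ a x\<close> into \<open>P = (x - \<Gamma>) ^ m H\<close> for an \<open>\<Gamma>t\<close> that agrees with \<open>\<Gamma>\<close>
  up to order \<open>a\<close>, and dividing out the content.\<close>

lemma shift_rescale_factorization:
  fixes P :: "'a::idom fps poly"
  assumes "P \<noteq> 0" and agree: "\<And>n. n \<le> a \<Longrightarrow> \<Gamma> $ n = \<Gamma>t $ n"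
  defines "\<delta> \<equiv> fps_shift a (\<Gamma> - \<Gamma>t)"
  obtains \<mu> W where
    "pcompose (pcompose P [:\<Gamma>t, 1:]) [:0, fps_X ^ a:]
       = smult (fps_X ^ \<mu>) ([:- \<delta>, 1:] ^ order \<Gamma> P * W)"
    "residue_poly W \<noteq> 0" "poly W \<delta> \<noteq> 0"
proof -
  let ?m = "order \<Gamma> P"
  let ?Sc = "\<lambda>Q. pcompose (pcompose Q [:\<Gamma>t, 1:]) [:0, fps_X ^ a:]"
  obtain H where H: "P = [:- \<Gamma>, 1:] ^ ?m * H" "\<not> [:- \<Gamma>, 1:] dvd H"
    using order_decomp[OF assms(1)] by blast
  have "\<Gamma> - \<Gamma>t = fps_X ^ a * \<delta>"
    unfolding \<delta>_def by (rule fps_X_power_mult_shift[symmetric]) (simp add: agree)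
  then have Sc_lin: "?Sc [:- \<Gamma>, 1:] = smult (fps_X ^ a) [:- \<delta>, 1:]"
    by (simp add: pcompose_pCons algebra_simps)
  have "?Sc P = ?Sc ([:- \<Gamma>, 1:] ^ ?m * H)" by (rule arg_cong[where f = ?Sc]) (rule H(1))
  also have "\<dots> = smult ((fps_X ^ a) ^ ?m) ([:- \<delta>, 1:] ^ ?m) * ?Sc H"
    by (simp only: pcompose_mult pcompose_power_left Sc_lin smult_power)
  finally have Sc_P: "?Sc P = smult ((fps_X ^ a) ^ ?m) ([:- \<delta>, 1:] ^ ?m) * ?Sc H" .
  have "poly (?Sc H) \<delta> = poly H \<Gamma>"
    using \<open>\<Gamma> - \<Gamma>t = fps_X ^ a * \<delta>\<close> by (simp add: poly_pcompose algebra_simps)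
  also have "\<dots> \<noteq> 0" using H(2) by (simp add: poly_eq_0_iff_dvd)
  finally have Sc_H: "poly (?Sc H) \<delta> \<noteq> 0" .
  then have "?Sc H \<noteq> 0" by auto
  then obtain c W where W: "?Sc H = smult (fps_X ^ c) W" "residue_poly W \<noteq> 0"
    by (rule fps_poly_factor_X_power)
  have "?Sc P = smult (fps_X ^ (a * ?m + c)) ([:- \<delta>, 1:] ^ ?m * W)"
    by (simp add: Sc_P W(1) power_add power_mult mult_smult_left mult_smult_right mult.commute)
  moreover have "poly W \<delta> \<noteq> 0"
    using Sc_H by (simp add: W(1))
  ultimately show ?thesis using that W(2) by blast
qed

lemma root_of_rescaled_factor:
  fixes P :: "'a::idom fps poly"
  assumes fac: "pcompose (pcompose P [:\<Gamma>t, 1:]) [:0, fps_X ^ a:]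
                  = smult (fps_X ^ \<mu>) ([:- \<delta>, 1:] ^ m * W)"
    and diff: "\<Gamma> - \<Gamma>t = fps_X ^ a * \<delta>" and W: "poly W \<delta> \<noteq> 0"
    and q: "q > 0" and r: "poly (map_poly (\<lambda>P. P oo fps_X ^ q) W) r = 0"
  defines "\<Xi> \<equiv> (\<Gamma>t oo fps_X ^ q) + fps_X ^ (a * q) * r"
  shows "poly (map_poly (\<lambda>P. P oo fps_X ^ q) P) \<Xi> = 0" and "\<Xi> \<noteq> \<Gamma> oo fps_X ^ q"
proof -
  interpret ramify: idom_hom "\<lambda>P :: 'a fps. P oo fps_X ^ q"
    using q by (rule idom_hom_fps_compose_X_power)
  have "poly (map_poly (\<lambda>P. P oo fps_X ^ q) P) \<Xi>
      = poly (map_poly (\<lambda>P. P oo fps_X ^ q) (pcompose (pcompose P [:\<Gamma>t, 1:]) [:0, fps_X ^ a:])) r"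
    unfolding \<Xi>_def by (rule poly_ramified_shift_rescale[OF q, symmetric])
  also have "\<dots> = 0"
    using r by (simp add: fac ramify.map_poly_hom_smult ramify.map_poly_hom_mult)
  finally show "poly (map_poly (\<lambda>P. P oo fps_X ^ q) P) \<Xi> = 0" .
  show "\<Xi> \<noteq> \<Gamma> oo fps_X ^ q"
  proof
    assume "\<Xi> = \<Gamma> oo fps_X ^ q"
    then have "fps_X ^ (a * q) * r = (\<Gamma> - \<Gamma>t) oo fps_X ^ q"
      by (simp add: \<Xi>_def ramify.hom_diff eq_diff_eq add.commute)
    also have "\<dots> = fps_X ^ (a * q) * (\<delta> oo fps_X ^ q)"
      using q by (simp add: diff ramify.hom_mult fps_X_power_compose_X_power)
    finally have "r = \<delta> oo fps_X ^ q" by simp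
    then have "poly W \<delta> oo fps_X ^ q = 0"
      using r by (simp add: ramify.poly_map_poly_hom)
    with W q show False by simp
  qed
qed

lemma contact_level:
  assumes "f \<noteq> 0" "\<gamma> \<in> NP_roots f" "\<exists>\<gamma>'\<in>NP_roots f. \<gamma>' \<noteq> \<gamma>"
  obtains N a where "level N \<gamma>" "contact \<gamma> f = of_nat a / of_nat N"
proof -
  obtain \<gamma>' where \<gamma>': "\<gamma>' \<in> NP_roots f" "\<gamma>' \<noteq> \<gamma>" "contact \<gamma> f = pord (\<lambda>q. \<gamma> q - \<gamma>' q)"
    using contact_attained[OF assms(1,3)] by blast
  define N where "N = den \<gamma> * den \<gamma>'"
  have "level N (\<lambda>q. \<gamma> q - \<gamma>' q)"
    unfolding N_def using NP_roots_level assms(2) \<gamma>'(1) by (blast intro: level_diff)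
  moreover have "(\<lambda>q. \<gamma> q - \<gamma>' q) \<noteq> (\<lambda>_. 0)" using \<gamma>'(2) by (metis (no_types) ext right_minus_eq)
  moreover have "level N \<gamma>"
    unfolding N_def using NP_roots_level[OF assms(2)] NP_roots_level[OF \<gamma>'(1)]
    by (blast intro: level_mult level_pos)
  ultimately show ?thesis using that pord_eq_subdegree \<gamma>'(3) by metis
qed

lemma to_fps_truncated_nth:
  assumes "level N \<gamma>" "contact \<gamma> f = of_nat a / of_nat N"
  shows "to_fps N (truncated \<gamma> f) $ n = (if n \<le> a then to_fps N \<gamma> $ n else 0)"
  using assms level_pos[OF assms(1)] by (simp add: to_fps_def truncated_def divide_le_cancel)

lemma eq_upto_if_to_fps_eq_upto:
  assumes "level M \<phi>" "level M \<psi>" "\<And>n. n \<le> b \<Longrightarrow> to_fps M \<phi> $ n = to_fps M \<psi> $ n"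
    and "y \<le> of_nat b / of_nat M"
  shows "\<phi> y = \<psi> y"
proof (cases "\<exists>n::nat. y = of_nat n / of_nat M")
  case True
  then obtain n where n: "y = of_nat n / of_nat M" by blast
  then have "n \<le> b" using assms(4) level_pos[OF assms(1)] by (simp add: divide_le_cancel)
  then show ?thesis using assms(3) n by (simp add: to_fps_def)
next
  case False
  then have "\<phi> y = 0" "\<psi> y = 0" using assms(1,2) unfolding level_def by blast+
  then show ?thesis by simp
qed

text \<open>A root of the rescaled factor \<open>W\<close> with vanishing constant term would give a root of
  \<open>f\<close> other than \<open>\<gamma>\<close> with contact \<open>> \<rho>\<close>.\<close>

lemma residue_coeff_0_nonzero:
  assumes f: "f \<noteq> 0" and \<gamma>: "\<gamma> \<in> NP_roots f"
    and N: "level N \<gamma>" and \<rho>: "contact \<gamma> f = of_nat a / of_nat N"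
    and fac: "pcompose (pcompose (lift N f) [:to_fps N (truncated \<gamma> f), 1:]) [:0, fps_X ^ a:]
                = smult (fps_X ^ \<mu>) ([:- \<delta>, 1:] ^ m * W)"
    and \<delta>: "to_fps N \<gamma> - to_fps N (truncated \<gamma> f) = fps_X ^ a * \<delta>"
    and W: "residue_poly W \<noteq> 0" "poly W \<delta> \<noteq> 0"
  shows "coeff (residue_poly W) 0 \<noteq> 0"
proof
  let ?\<Gamma> = "to_fps N \<gamma>" and ?\<Gamma>t = "to_fps N (truncated \<gamma> f)"
  assume "coeff (residue_poly W) 0 = 0"
  then obtain q r where q: "q > 0" and r: "poly (map_poly (\<lambda>P. P oo fps_X ^ q) W) r = 0" "r $ 0 = 0"
    using newton_puiseux_root[OF W(1)] by (metis poly_0_coeff_0)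
  define \<Xi> where "\<Xi> = (?\<Gamma>t oo fps_X ^ q) + fps_X ^ (a * q) * r"
  have N0: "N > 0" and Nq: "N * q > 0" using level_pos[OF N] q by auto
  define \<xi> where "\<xi> = of_fps (N * q) \<Xi>"
  have l\<xi>: "level (N * q) \<xi>" and l\<gamma>: "level (N * q) \<gamma>"
    using level_of_fps[OF Nq] level_mult[OF N q] by (simp_all add: \<xi>_def)
  have \<xi>_fps: "to_fps (N * q) \<xi> = \<Xi>" by (simp add: \<xi>_def to_fps_of_fps[OF Nq])
  have \<gamma>_fps: "to_fps (N * q) \<gamma> = ?\<Gamma> oo fps_X ^ q" by (rule to_fps_mult_level[OF N q])
  have \<Xi>_nth: "\<Xi> $ n = (?\<Gamma> oo fps_X ^ q) $ n" if "n \<le> a * q" for n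
  proof -
    have "(fps_X ^ (a * q) * r) $ n = 0"
      using that r(2) by (cases "n = a * q") (simp_all add: fps_X_power_mult_nth)
    moreover have "(?\<Gamma>t oo fps_X ^ q) $ n = (?\<Gamma> oo fps_X ^ q) $ n"
      using that q to_fps_truncated_nth[OF N \<rho>]
      by (auto simp: fps_compose_X_power_nth elim!: dvdE)
    ultimately show ?thesis by (simp add: \<Xi>_def)
  qed
  have "\<xi> 0 = 0"
    using \<Xi>_nth[of 0] NP_roots_level[OF \<gamma>] of_fps_nth[OF Nq, of \<Xi> 0]
    by (simp add: \<xi>_def to_fps_def)
  moreover have "poly (lift (N * q) f) (to_fps (N * q) \<xi>) = 0"
    using root_of_rescaled_factor(1)[OF fac \<delta> W(2) q r(1)]
    by (simp add: \<xi>_fps \<Xi>_def lift_mult_level[OF N0 q])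
  ultimately have "\<xi> \<in> NP_roots f" using mem_NP_roots_iff[OF l\<xi>] by blast
  moreover have "\<gamma> y = \<xi> y" if "y \<le> contact \<gamma> f" for y
    using that q \<rho> \<Xi>_nth
    by (intro eq_upto_if_to_fps_eq_upto[OF l\<gamma> l\<xi>, of "a * q"]) (simp_all add: \<xi>_fps \<gamma>_fps)
  ultimately have "\<xi> = \<gamma>" by (rule NP_root_eq_if_agrees_to_contact[OF f \<gamma>])
  then show False
    using root_of_rescaled_factor(2)[OF fac \<delta> W(2) q r(1)] \<xi>_fps \<gamma>_fps by (simp add: \<Xi>_def)
qed

lemma line_coeff_iff_residue_coeff:
  assumes N: "N > 0" and fac: "pcompose F [:0, fps_X ^ a:] = smult (fps_X ^ \<mu>) V"
  shows "(\<exists>e. of_nat i * (of_nat a / of_nat N) + e = of_nat \<mu> / of_nat N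
              \<and> of_fps N (coeff F i) e \<noteq> 0)
         \<longleftrightarrow> coeff (residue_poly V) i \<noteq> 0"
proof -
  have "fps_X ^ \<mu> * coeff V i = fps_X ^ (a * i) * coeff F i"
    using arg_cong[OF fac, of "\<lambda>Q. coeff Q i"] by (simp add: coeff_pcompose_linear power_mult)
  moreover have "coeff (residue_poly V) i = (fps_X ^ \<mu> * coeff V i) $ \<mu>"
    by (simp add: coeff_map_poly fps_X_power_mult_nth)
  ultimately have "coeff (residue_poly V) i = (fps_X ^ (a * i) * coeff F i) $ \<mu>" by simp
  also have "\<dots> = (if \<mu> < a * i then 0 else coeff F i $ (\<mu> - a * i))"
    by (simp add: fps_X_power_mult_nth)
  finally have res: "coeff (residue_poly V) i = (if \<mu> < a * i then 0 else coeff F i $ (\<mu> - a * i))" .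
  have line: "of_nat i * (of_nat a / of_nat N) + of_nat n / of_nat N = (of_nat \<mu> / of_nat N :: rat)
      \<longleftrightarrow> a * i + n = \<mu>" for n
  proof -
    have "of_nat i * (of_nat a / of_nat N) + of_nat n / of_nat N = (of_nat (a * i + n) / of_nat N :: rat)"
      using N by (simp add: field_simps)
    then show ?thesis using N by (simp add: divide_cancel_right del: of_nat_add of_nat_mult)
  qed
  show ?thesis
  proof
    assume "\<exists>e. of_nat i * (of_nat a / of_nat N) + e = of_nat \<mu> / of_nat N
              \<and> of_fps N (coeff F i) e \<noteq> 0"
    then obtain e where e: "of_nat i * (of_nat a / of_nat N) + e = of_nat \<mu> / of_nat N"
        "of_fps N (coeff F i) e \<noteq> 0" by blast
    obtain n where n: "e = of_nat n / of_nat N" "of_fps N (coeff F i) e = coeff F i $ n"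
      using of_fps_cases[OF N, of "coeff F i" e] e(2) by blast
    then have "a * i + n = \<mu>" using e(1) line[of n] by simp
    with n e(2) show "coeff (residue_poly V) i \<noteq> 0" by (auto simp: res)
  next
    assume "coeff (residue_poly V) i \<noteq> 0"
    then have "\<not> \<mu> < a * i" "coeff F i $ (\<mu> - a * i) \<noteq> 0" by (auto simp: res split: if_splits)
    then show "\<exists>e. of_nat i * (of_nat a / of_nat N) + e = of_nat \<mu> / of_nat N
                 \<and> of_fps N (coeff F i) e \<noteq> 0"
      using line[of "\<mu> - a * i"] of_fps_nth[OF N, of "coeff F i" "\<mu> - a * i"]
      by (intro exI[where x = "of_nat (\<mu> - a * i) / of_nat N"]) simp
  qed
qed

lemma pord_peval_approx:
  assumes L: "level N \<phi>" and high: "\<And>n. n > a \<Longrightarrow> to_fps N \<phi> $ n = 0"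
    and fac: "pcompose (pcompose (lift N f) [:to_fps N \<phi>, 1:]) [:0, fps_X ^ a:]
                = smult (fps_X ^ \<mu>) V"
    and generic: "poly (residue_poly V) (of_real c - to_fps N \<phi> $ a) \<noteq> 0"
  shows "pord (peval f (approx (of_nat a / of_nat N) \<phi> c)) = of_nat \<mu> / of_nat N"
proof -
  have N: "N > 0" using level_pos[OF L] .
  define b where "b = of_real c - to_fps N \<phi> $ a"
  define A where "A = approx (of_nat a / of_nat N) \<phi> c"
  have LA: "level N A"
    using L unfolding level_def A_def approx_def by (auto split: if_splits)
  have "to_fps N A = to_fps N \<phi> + fps_const b * fps_X ^ a"
  proof (rule fps_ext)
    fix n
    show "to_fps N A $ n = (to_fps N \<phi> + fps_const b * fps_X ^ a) $ n"
      using N high[of n]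
      by (cases n a rule: linorder_cases)
         (simp_all add: A_def approx_def to_fps_def b_def divide_less_cancel fps_X_power_mult_right_nth)
  qed
  then have "poly (lift N f) (to_fps N A)
      = poly (pcompose (pcompose (lift N f) [:to_fps N \<phi>, 1:]) [:0, fps_X ^ a:]) (fps_const b)"
    by (simp add: poly_pcompose mult.commute)
  also have "\<dots> = fps_X ^ \<mu> * poly V (fps_const b)" by (simp add: fac)
  finally have "poly (lift N f) (to_fps N A) = fps_X ^ \<mu> * poly V (fps_const b)" .
  moreover have "poly V (fps_const b) $ 0 \<noteq> 0"
    using generic by (simp add: poly_residue_poly b_def)
  then have "poly V (fps_const b) \<noteq> 0" "subdegree (fps_X ^ \<mu> * poly V (fps_const b)) = \<mu>"
    by (auto intro: subdegreeI simp: fps_X_power_mult_nth)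
  ultimately show ?thesis
    using peval_level[OF LA] pord_of_fps[OF N, of "fps_X ^ \<mu> * poly V (fps_const b)"]
    by (simp add: A_def)
qed

lemma residue_poly_linear_power_mult:
  fixes W :: "'a::idom fps poly"
  assumes "\<delta> $ 0 = 0" "coeff (residue_poly W) 0 \<noteq> 0"
  shows "residue_poly ([:- \<delta>, 1:] ^ m * W) \<noteq> 0"
    and "Min {i. coeff (residue_poly ([:- \<delta>, 1:] ^ m * W)) i \<noteq> 0} = m"
proof -
  have "residue_poly ([:- \<delta>, 1:] ^ m * W) = monom 1 m * residue_poly W"
    using assms(1) by (simp add: fps_residue.map_poly_hom_mult fps_residue.map_poly_hom_power
        fps_residue.map_poly_hom_pCons fps_residue.hom_uminus monom_altdef)
  then have coeff_res: "coeff (residue_poly ([:- \<delta>, 1:] ^ m * W)) i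
      = (if i < m then 0 else coeff (residue_poly W) (i - m))" for i
    by (simp add: coeff_monom_mult)
  then have "coeff (residue_poly ([:- \<delta>, 1:] ^ m * W)) m \<noteq> 0" using assms(2) by simp
  then show "residue_poly ([:- \<delta>, 1:] ^ m * W) \<noteq> 0" by auto
  show "Min {i. coeff (residue_poly ([:- \<delta>, 1:] ^ m * W)) i \<noteq> 0} = m"
  proof (rule Min_eqI)
    show "finite {i. coeff (residue_poly ([:- \<delta>, 1:] ^ m * W)) i \<noteq> 0}"
      by (rule finite_subset[of _ "{..degree (residue_poly ([:- \<delta>, 1:] ^ m * W))}"])
         (auto intro: le_degree)
  qed (use assms(2) coeff_res in \<open>auto split: if_splits\<close>)
qed

lemma mult_root_eq_Min_line:
  assumes f: "f \<noteq> 0" and \<gamma>: "\<gamma> \<in> NP_roots f" and other: "\<exists>\<gamma>'\<in>NP_roots f. \<gamma>' \<noteq> \<gamma>"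
  shows "\<exists>F::real set. finite F \<and> (\<forall>c. c \<notin> F \<longrightarrow>
          mult_root f \<gamma> = Min {i. \<exists>e. of_nat i * contact \<gamma> f + e
                                   = pord (peval f (approx (contact \<gamma> f) (truncated \<gamma> f) c))
                               \<and> shift_coeff f (truncated \<gamma> f) i e \<noteq> 0})"
proof -
  obtain N a where N: "level N \<gamma>" and \<rho>: "contact \<gamma> f = of_nat a / of_nat N"
    using contact_level[OF f \<gamma> other] .
  have N0: "N > 0" using level_pos[OF N] .
  let ?t = "truncated \<gamma> f"
  let ?P = "lift N f" and ?\<Gamma> = "to_fps N \<gamma>" and ?\<Gamma>t = "to_fps N ?t"
  define \<delta> where "\<delta> = fps_shift a (?\<Gamma> - ?\<Gamma>t)"
  define m where "m = mult_root f \<gamma>"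
  have m: "m = order ?\<Gamma> ?P"
    using mult_root_level[OF f _ N] \<gamma> by (simp add: m_def NP_roots_def)
  have agree: "?\<Gamma> $ n = ?\<Gamma>t $ n" if "n \<le> a" for n
    using that to_fps_truncated_nth[OF N \<rho>] by simp
  obtain \<mu> W where fac: "pcompose (pcompose ?P [:?\<Gamma>t, 1:]) [:0, fps_X ^ a:]
                        = smult (fps_X ^ \<mu>) ([:- \<delta>, 1:] ^ m * W)"
    and W: "residue_poly W \<noteq> 0" "poly W \<delta> \<noteq> 0"
    using shift_rescale_factorization[OF lift_nonzero[OF N0 f] agree] by (auto simp: m \<delta>_def)
  have \<delta>: "?\<Gamma> - ?\<Gamma>t = fps_X ^ a * \<delta>"
    unfolding \<delta>_def by (rule fps_X_power_mult_shift[symmetric]) (simp add: agree)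
  define V where "V = [:- \<delta>, 1:] ^ m * W"
  have "\<delta> $ 0 = 0" by (simp add: \<delta>_def agree)
  then have V: "residue_poly V \<noteq> 0" "Min {i. coeff (residue_poly V) i \<noteq> 0} = m"
    unfolding V_def using residue_coeff_0_nonzero[OF f \<gamma> N \<rho> fac \<delta> W]
    by (rule residue_poly_linear_power_mult)+
  have line_eq: "{i. \<exists>e. of_nat i * contact \<gamma> f + e = of_nat \<mu> / of_nat N
                       \<and> shift_coeff f ?t i e \<noteq> 0}
               = {i. coeff (residue_poly V) i \<noteq> 0}"
    using line_coeff_iff_residue_coeff[OF N0 fac[folded V_def]]
    by (simp add: \<rho> shift_coeff_level[OF level_truncated[OF N]])
  define F where "F = {c::real. poly (residue_poly V) (of_real c - ?\<Gamma>t $ a) = 0}"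
  have "finite F"
  proof -
    have "inj (\<lambda>c::real. (of_real c :: complex) - ?\<Gamma>t $ a)" by (rule injI) simp
    then show ?thesis
      unfolding F_def using finite_vimageI[OF poly_roots_finite[OF V(1)]] by (simp add: vimage_def)
  qed
  moreover have "mult_root f \<gamma> = Min {i. \<exists>e. of_nat i * contact \<gamma> f + e
                                   = pord (peval f (approx (contact \<gamma> f) ?t c))
                               \<and> shift_coeff f ?t i e \<noteq> 0}" if "c \<notin> F" for c
  proof -
    have "poly (residue_poly V) (of_real c - ?\<Gamma>t $ a) \<noteq> 0" using that by (simp add: F_def)
    moreover have "?\<Gamma>t $ n = 0" if "n > a" for n
      using that to_fps_truncated_nth[OF N \<rho>] by simp
    ultimately have "pord (peval f (approx (of_nat a / of_nat N) ?t c)) = of_nat \<mu> / of_nat N"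
      using pord_peval_approx[OF level_truncated[OF N] _ fac[folded V_def]] by blast
    then show ?thesis using line_eq V(2) by (simp add: \<rho> m_def)
  qed
  ultimately show ?thesis by blast
qed

theorem theorem4p1:
  fixes f :: "real poly poly" and \<gamma> :: pseries
  assumes "regular_x f"
    and "\<gamma> \<in> NP_roots f"
    and "\<exists>\<gamma>'\<in>NP_roots f. \<gamma>' \<noteq> \<gamma>"
  shows "(is_real (truncated \<gamma> f) \<longrightarrow> is_real \<gamma>)
    \<and> (\<exists>F::real set. finite F \<and> (\<forall>c. c \<notin> F \<longrightarrow>
          mult_root f \<gamma> = Min {i. \<exists>e. of_nat i * contact \<gamma> f + e
                                   = pord (peval f (approx (contact \<gamma> f) (truncated \<gamma> f) c))
                               \<and> shift_coeff f (truncated \<gamma> f) i e \<noteq> 0}))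
    \<and> (\<forall>g :: real poly poly. regular_x g \<longrightarrow>
          NP_root_mod (gcd f g) (contact \<gamma> f) (truncated \<gamma> f) \<longrightarrow> \<gamma> \<in> NP_roots g)"
proof -
  have f: "f \<noteq> 0" using assms(1) by (auto simp: regular_x_def bcoeff_def)
  show ?thesis
    using is_real_if_truncated_is_real[OF f assms(2)]
      mult_root_eq_Min_line[OF f assms(2,3)]
      NP_root_of_other_if_gcd_root_mod_contact[OF f assms(2)]
    by blast
qed

end
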